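(* Let $V$ be a quasi-regular mixed lattice vector space and $A$ a mixed lattice subspace of $V$. Then the left disjoint complement ${}^{\perp}A$ is a regular specific band in $V$. Moreover, if ${}^{\perp}A$ is an ideal, then it is a regular band.
   Context: A mixed lattice vector space is a real vector space $V$ with two partial orderings $\le$ (initial) and $\preceq$ (specific), each compatible with the vector space structure, such that for all $x,y$ the mixed lower envelope $x\curlywedge y=\max\{w: w\preceq x,\ w\le y\}$ and mixed upper envelope $x\curlyvee y=\min\{w: x\preceq w,\ y\le w\}$ exist (max/min with respect to $\le$). $V_p=\{x:0\le x\}$, $V_{sp}=\{x:0\preceq x\}$, $E_p=E\cap V_p$, $E_{sp}=E\cap V_{sp}$. $V$ is quasi-regular if $V_{sp}$ is closed under $\curlywedge,\curlyvee$. A mixed lattice subspace is a linear subspace closed under $\curlywedge,\curlyvee$; it is regular if $S=S_{sp}-S_{sp}$. An ideal (resp. specific ideal) is a mixed lattice subspace that is $(\le)$-order convex (resp. $(\preceq)$-order convex), where $U$ is $(\le)$-order convex if $x\le z\le y$, $x,y\in U$ imply $z\in U$, and analogously for $\preceq$. A set $E$ is $(\le)$-order closed if $\sup C\in E$ for every nonempty $(\le)$-upwards-directed $C\subseteq E$ whose $\le$-supremum exists in $V$, and $\inf C\in E$ for every nonempty $(\le)$-downwards-directed $C\subseteq E$ whose $\le$-infimum exists in $V$; $(\preceq)$-order closed is defined the same way using $\preceq$-directedness and $\preceq$-suprema/infima. A band is a $(\le)$-order closed ideal; a specific band is a $(\preceq)$-order closed specific ideal. The left disjoint complement ${}^{\perp}A$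 of a mixed lattice subspace $A$ is the smallest specific ideal containing the set $\{x\in V_{sp}: x\curlywedge z=0 \text{ for all } z\in A_p\}$. *)

theory Defs
  imports Complex_Main
begin

text \<open>A real vector space V (the type 'a) carries two relations: le (the initial
  order \<le>) and sle (the specific order \<preceq>).\<close>

definition vs_partial_order :: "('a::real_vector \<Rightarrow> 'a \<Rightarrow> bool) \<Rightarrow> bool" where
  "vs_partial_order R \<longleftrightarrow>
     (\<forall>x. R x x) \<and>
     (\<forall>x y. R x y \<and> R y x \<longrightarrow> x = y) \<and>
     (\<forall>x y z. R x y \<and> R y z \<longrightarrow> R x z) \<and>
     (\<forall>x y z. R x y \<longrightarrow> R (x + z) (y + z)) \<and>
     (\<forall>x (c::real). R 0 x \<and> 0 \<le> c \<longrightarrow> R 0 (c *\<^sub>R x))"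

definition is_greatest_wrt :: "('a \<Rightarrow> 'a \<Rightarrow> bool) \<Rightarrow> 'a set \<Rightarrow> 'a \<Rightarrow> bool" where
  "is_greatest_wrt R S m \<longleftrightarrow> m \<in> S \<and> (\<forall>w\<in>S. R w m)"

definition is_least_wrt :: "('a \<Rightarrow> 'a \<Rightarrow> bool) \<Rightarrow> 'a set \<Rightarrow> 'a \<Rightarrow> bool" where
  "is_least_wrt R S m \<longleftrightarrow> m \<in> S \<and> (\<forall>w\<in>S. R m w)"

definition mlow :: "('a \<Rightarrow> 'a \<Rightarrow> bool) \<Rightarrow> ('a \<Rightarrow> 'a \<Rightarrow> bool) \<Rightarrow> 'a \<Rightarrow> 'a \<Rightarrow> 'a" where
  "mlow le sle x y = (THE m. is_greatest_wrt le {w. sle w x \<and> le w y} m)"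

definition mup :: "('a \<Rightarrow> 'a \<Rightarrow> bool) \<Rightarrow> ('a \<Rightarrow> 'a \<Rightarrow> bool) \<Rightarrow> 'a \<Rightarrow> 'a \<Rightarrow> 'a" where
  "mup le sle x y = (THE m. is_least_wrt le {w. sle x w \<and> le y w} m)"

definition mixed_lattice_vs ::
  "('a::real_vector \<Rightarrow> 'a \<Rightarrow> bool) \<Rightarrow> ('a \<Rightarrow> 'a \<Rightarrow> bool) \<Rightarrow> bool" where
  "mixed_lattice_vs le sle \<longleftrightarrow>
     vs_partial_order le \<and> vs_partial_order sle \<and>
     (\<forall>x y. \<exists>m. is_greatest_wrt le {w. sle w x \<and> le w y} m) \<and>
     (\<forall>x y. \<exists>m. is_least_wrt le {w. sle x w \<and> le y w} m)"

definition quasi_regular ::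
  "('a::real_vector \<Rightarrow> 'a \<Rightarrow> bool) \<Rightarrow> ('a \<Rightarrow> 'a \<Rightarrow> bool) \<Rightarrow> bool" where
  "quasi_regular le sle \<longleftrightarrow>
     (\<forall>x y. sle 0 x \<and> sle 0 y \<longrightarrow> sle 0 (mlow le sle x y) \<and> sle 0 (mup le sle x y))"

definition mixed_lattice_subspace ::
  "('a::real_vector \<Rightarrow> 'a \<Rightarrow> bool) \<Rightarrow> ('a \<Rightarrow> 'a \<Rightarrow> bool) \<Rightarrow> 'a set \<Rightarrow> bool" where
  "mixed_lattice_subspace le sle S \<longleftrightarrow>
     subspace S \<and>
     (\<forall>x\<in>S. \<forall>y\<in>S. mlow le sle x y \<in> S \<and> mup le sle x y \<in> S)"

definition regular_subspace ::
  "('a::real_vector \<Rightarrow> 'a \<Rightarrow> bool) \<Rightarrow> 'a set \<Rightarrow> bool" where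
  "regular_subspace sle S \<longleftrightarrow>
     S = {x - y | x y. x \<in> S \<and> sle 0 x \<and> y \<in> S \<and> sle 0 y}"

definition order_convex :: "('a \<Rightarrow> 'a \<Rightarrow> bool) \<Rightarrow> 'a set \<Rightarrow> bool" where
  "order_convex R U \<longleftrightarrow> (\<forall>x y z. x \<in> U \<and> y \<in> U \<and> R x z \<and> R z y \<longrightarrow> z \<in> U)"

definition ideal_ml ::
  "('a::real_vector \<Rightarrow> 'a \<Rightarrow> bool) \<Rightarrow> ('a \<Rightarrow> 'a \<Rightarrow> bool) \<Rightarrow> 'a set \<Rightarrow> bool" where
  "ideal_ml le sle U \<longleftrightarrow> mixed_lattice_subspace le sle U \<and> order_convex le U"

definition specific_ideal ::
  "('a::real_vector \<Rightarrow> 'a \<Rightarrow> bool) \<Rightarrow> ('a \<Rightarrow> 'a \<Rightarrow> bool) \<Rightarrow> 'a set \<Rightarrow> bool" where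
  "specific_ideal le sle U \<longleftrightarrow> mixed_lattice_subspace le sle U \<and> order_convex sle U"

definition order_closed :: "('a \<Rightarrow> 'a \<Rightarrow> bool) \<Rightarrow> 'a set \<Rightarrow> bool" where
  "order_closed R E \<longleftrightarrow>
     (\<forall>C s. C \<noteq> {} \<and> C \<subseteq> E \<and> (\<forall>a\<in>C. \<forall>b\<in>C. \<exists>c\<in>C. R a c \<and> R b c) \<and>
            is_least_wrt R {u. \<forall>c\<in>C. R c u} s \<longrightarrow> s \<in> E) \<and>
     (\<forall>C s. C \<noteq> {} \<and> C \<subseteq> E \<and> (\<forall>a\<in>C. \<forall>b\<in>C. \<exists>c\<in>C. R c a \<and> R c b) \<and>
            is_greatest_wrt R {l. \<forall>c\<in>C. R l c} s \<longrightarrow> s \<in> E)"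

definition band ::
  "('a::real_vector \<Rightarrow> 'a \<Rightarrow> bool) \<Rightarrow> ('a \<Rightarrow> 'a \<Rightarrow> bool) \<Rightarrow> 'a set \<Rightarrow> bool" where
  "band le sle B \<longleftrightarrow> ideal_ml le sle B \<and> order_closed le B"

definition specific_band ::
  "('a::real_vector \<Rightarrow> 'a \<Rightarrow> bool) \<Rightarrow> ('a \<Rightarrow> 'a \<Rightarrow> bool) \<Rightarrow> 'a set \<Rightarrow> bool" where
  "specific_band le sle B \<longleftrightarrow> specific_ideal le sle B \<and> order_closed sle B"

definition left_disjoint_complement ::
  "('a::real_vector \<Rightarrow> 'a \<Rightarrow> bool) \<Rightarrow> ('a \<Rightarrow> 'a \<Rightarrow> bool) \<Rightarrow> 'a set \<Rightarrow> 'a set" where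
  "left_disjoint_complement le sle A =
     \<Inter>{I. specific_ideal le sle I \<and>
           {x. sle 0 x \<and> (\<forall>z\<in>A. le 0 z \<longrightarrow> mlow le sle x z = 0)} \<subseteq> I}"

end

theory Submission
  imports Defs
begin

text \<open>Both envelopes are governed by the mixed positive part \<open>mpos v = 0 \<curlyvee> v\<close>, the
  \<open>\<le>\<close>-least \<open>\<preceq>\<close>-positive \<open>\<le>\<close>-upper bound of \<open>v\<close>: \<open>x \<curlyvee> y = x + mpos (y - x)\<close> and
  \<open>x \<curlywedge> y = x - mpos (x - y)\<close>. In these terms the generating set of the left disjoint
  complement is \<open>D = {x \<succeq> 0. mpos (x - z) = x for all z \<in> A\<^sub>p}\<close>. It is a convex cone,
  \<open>\<preceq>\<close>-hereditary within \<open>V\<^sub>s\<^sub>p\<close>, and quasi-regularity (\<open>x \<curlywedge> y \<succeq> 0\<close> on \<open>V\<^sub>s\<^sub>p\<close>)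
  gives \<open>mpos (a - b) \<preceq> a\<close>, hence \<open>mpos (a - b) \<in> D\<close> for \<open>a, b \<in> D\<close>. Therefore \<open>D - D\<close>
  is already a specific ideal, so it is the left disjoint complement, and its
  \<open>\<preceq>\<close>-positive part is \<open>D\<close>, which is regularity. \<open>D\<close> is also closed under
  \<open>\<preceq>\<close>-suprema; translating a directed set so that it starts at one of its elements
  yields \<open>\<preceq>\<close>-order closedness. For a \<open>\<le>\<close>-supremum \<open>t\<close> one only gets \<open>mpos t \<in> D\<close>, but
  if the complement is \<open>\<le>\<close>-convex, then \<open>0 \<le> t \<le> mpos t\<close> puts \<open>t\<close> into it.\<close>

section \<open>Partial orders compatible with the vector space structure\<close>

lemma vpo_refl: "vs_partial_order R \<Longrightarrow> R x x"
  unfolding vs_partial_order_def by blast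

lemma vpo_antisym: "vs_partial_order R \<Longrightarrow> R x y \<Longrightarrow> R y x \<Longrightarrow> x = y"
  unfolding vs_partial_order_def by blast

lemma vpo_trans: "vs_partial_order R \<Longrightarrow> R x y \<Longrightarrow> R y z \<Longrightarrow> R x z"
  unfolding vs_partial_order_def by blast

lemma vpo_add: "vs_partial_order R \<Longrightarrow> R x y \<Longrightarrow> R (x + z) (y + z)"
  unfolding vs_partial_order_def by blast

lemma vpo_scaleR_nonneg: "vs_partial_order R \<Longrightarrow> R 0 x \<Longrightarrow> 0 \<le> c \<Longrightarrow> R 0 (c *\<^sub>R x)"
  unfolding vs_partial_order_def by blast

lemma vpo_translate:
  assumes "vs_partial_order R" "R a b" "a + c = a'" "b + c = b'"
  shows "R a' b'"
  using vpo_add[OF assms(1,2), of c] assms(3,4) by simp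

lemma vpo_iff_diff:
  assumes "vs_partial_order R"
  shows "R x y \<longleftrightarrow> R 0 (y - x)"
proof
  assume "R x y"
  then show "R 0 (y - x)" by (rule vpo_translate[OF assms, where c = "- x"]) simp_all
next
  assume "R 0 (y - x)"
  then show "R x y" by (rule vpo_translate[OF assms, where c = x]) simp_all
qed

lemma vpo_nonneg_add:
  assumes R: "vs_partial_order R" and "R 0 a" "R 0 b"
  shows "R 0 (a + b)"
proof -
  have "R a (a + b)" using vpo_translate[OF R \<open>R 0 b\<close>, of a] by (simp add: add.commute)
  then show ?thesis using vpo_trans[OF R \<open>R 0 a\<close>] by blast
qed

lemma vpo_scaleR:
  assumes R: "vs_partial_order R" and "R x y" "0 \<le> c"
  shows "R (c *\<^sub>R x) (c *\<^sub>R y)"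
proof -
  have "R 0 (c *\<^sub>R (y - x))"
    using vpo_scaleR_nonneg[OF R _ \<open>0 \<le> c\<close>] \<open>R x y\<close> vpo_iff_diff[OF R] by blast
  then show ?thesis using vpo_iff_diff[OF R] by (simp add: algebra_simps)
qed

lemma vpo_uminus_iff:
  assumes "vs_partial_order R"
  shows "R (- x) (- y) \<longleftrightarrow> R y x"
  using vpo_iff_diff[OF assms, of "- x" "- y"] vpo_iff_diff[OF assms, of y x] by simp

lemma the_is_least_wrt:
  assumes "vs_partial_order R" "is_least_wrt R S m"
  shows "(THE m. is_least_wrt R S m) = m"
proof (rule the_equality)
  fix m' assume "is_least_wrt R S m'"
  with assms show "m' = m" unfolding is_least_wrt_def by (blast intro: vpo_antisym)
qed (rule assms(2))

lemma the_is_greatest_wrt: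
  assumes "vs_partial_order R" "is_greatest_wrt R S m"
  shows "(THE m. is_greatest_wrt R S m) = m"
proof (rule the_equality)
  fix m' assume "is_greatest_wrt R S m'"
  with assms show "m' = m" unfolding is_greatest_wrt_def by (blast intro: vpo_antisym)
qed (rule assms(2))

lemma is_least_wrt_translate:
  assumes R: "vs_partial_order R"
    and dir: "\<forall>a\<in>C. \<forall>b\<in>C. \<exists>c\<in>C. R a c \<and> R b c" and c0: "c0 \<in> C"
    and s: "is_least_wrt R {u. \<forall>c\<in>C. R c u} s"
  shows "is_least_wrt R {u. \<forall>d\<in>(\<lambda>c. c - c0) ` {c \<in> C. R c0 c}. R d u} (s - c0)"
  unfolding is_least_wrt_def
proof (intro conjI ballI)
  have "R (c - c0) (s - c0)" if "c \<in> C" for c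
  proof -
    have "R c s" using s that unfolding is_least_wrt_def by blast
    then show ?thesis by (rule vpo_translate[OF R, where c = "- c0"]) simp_all
  qed
  then show "s - c0 \<in> {u. \<forall>d\<in>(\<lambda>c. c - c0) ` {c \<in> C. R c0 c}. R d u}" by auto
next
  fix u assume u: "u \<in> {u. \<forall>d\<in>(\<lambda>c. c - c0) ` {c \<in> C. R c0 c}. R d u}"
  have "R c (c0 + u)" if "c \<in> C" for c
  proof -
    obtain c' where c': "c' \<in> C" "R c c'" "R c0 c'" using dir \<open>c \<in> C\<close> c0 by blast
    then have "R (c' - c0) u" using u by auto
    then have "R c' (c0 + u)" by (rule vpo_translate[OF R, where c = c0]) (simp_all add: algebra_simps)
    then show ?thesis using vpo_trans[OF R c'(2)] by blast
  qed
  then have "R s (c0 + u)" using s unfolding is_least_wrt_def by blast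
  then show "R (s - c0) u" by (rule vpo_translate[OF R, where c = "- c0"]) simp_all
qed

lemma order_closed_if_Sup_closed:
  assumes R: "vs_partial_order R" and uminus: "\<And>x. x \<in> E \<Longrightarrow> - x \<in> E"
    and Sup: "\<And>C s. C \<noteq> {} \<Longrightarrow> C \<subseteq> E \<Longrightarrow> \<forall>a\<in>C. \<forall>b\<in>C. \<exists>c\<in>C. R a c \<and> R b c \<Longrightarrow>
                is_least_wrt R {u. \<forall>c\<in>C. R c u} s \<Longrightarrow> s \<in> E"
  shows "order_closed R E"
  unfolding order_closed_def
proof (intro conjI allI impI; elim conjE)
  fix C s
  assume "C \<noteq> {}" "C \<subseteq> E" "\<forall>a\<in>C. \<forall>b\<in>C. \<exists>c\<in>C. R a c \<and> R b c"
    "is_least_wrt R {u. \<forall>c\<in>C. R c u} s"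
  then show "s \<in> E" by (rule Sup)
next
  fix C s
  assume C: "C \<noteq> {}" "C \<subseteq> E" "\<forall>a\<in>C. \<forall>b\<in>C. \<exists>c\<in>C. R c a \<and> R c b"
    and s: "is_greatest_wrt R {l. \<forall>c\<in>C. R l c} s"
  have "uminus ` C \<noteq> {}" using C(1) by blast
  moreover have "uminus ` C \<subseteq> E" using C(2) uminus by blast
  moreover have "\<forall>a\<in>uminus ` C. \<forall>b\<in>uminus ` C. \<exists>c\<in>uminus ` C. R a c \<and> R b c"
  proof (intro ballI)
    fix a b assume "a \<in> uminus ` C" "b \<in> uminus ` C"
    then obtain a' b' where "a' \<in> C" "b' \<in> C" and ab: "a = - a'" "b = - b'" by blast
    then obtain c where "c \<in> C" "R c a'" "R c b'" using C(3) by blast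
    then have "R a (- c)" "R b (- c)" unfolding ab by (simp_all add: vpo_uminus_iff[OF R])
    with \<open>c \<in> C\<close> show "\<exists>c\<in>uminus ` C. R a c \<and> R b c" by blast
  qed
  moreover have "is_least_wrt R {u. \<forall>c\<in>uminus ` C. R c u} (- s)"
    unfolding is_least_wrt_def
  proof (intro conjI ballI CollectI)
    fix c assume "c \<in> uminus ` C"
    then obtain c' where "c' \<in> C" "c = - c'" by blast
    moreover from \<open>c' \<in> C\<close> have "R s c'" using s unfolding is_greatest_wrt_def by blast
    ultimately show "R c (- s)" by (simp add: vpo_uminus_iff[OF R])
  next
    fix w assume w: "w \<in> {u. \<forall>c\<in>uminus ` C. R c u}"
    have "R (- w) c" if "c \<in> C" for c
    proof -
      have "R (- c) (- (- w))" using w that by simp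
      then show ?thesis by (simp only: vpo_uminus_iff[OF R])
    qed
    then have "R (- w) s" using s unfolding is_greatest_wrt_def by blast
    then show "R (- s) w" using vpo_uminus_iff[OF R, of s "- w"] by simp
  qed
  ultimately have "- s \<in> E" by (rule Sup)
  from uminus[OF this] show "s \<in> E" by simp
qed

section \<open>The mixed positive part in a quasi-regular mixed lattice vector space\<close>

locale quasi_regular_mixed_lattice =
  fixes le sle :: "'a::real_vector \<Rightarrow> 'a \<Rightarrow> bool"
  assumes mixed_lattice: "mixed_lattice_vs le sle"
    and quasi_regular: "quasi_regular le sle"
begin

lemma le_order: "vs_partial_order le" and sle_order: "vs_partial_order sle"
  using mixed_lattice unfolding mixed_lattice_vs_def by auto

lemma le_translate: "le a b \<Longrightarrow> a + c = a' \<Longrightarrow> b + c = b' \<Longrightarrow> le a' b'"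
  by (rule vpo_translate[OF le_order])

lemma sle_translate: "sle a b \<Longrightarrow> a + c = a' \<Longrightarrow> b + c = b' \<Longrightarrow> sle a' b'"
  by (rule vpo_translate[OF sle_order])

lemma sle_iff_diff: "sle x y \<longleftrightarrow> sle 0 (y - x)"
  by (rule vpo_iff_diff[OF sle_order])

definition mpos :: "'a \<Rightarrow> 'a" where
  "mpos v = mup le sle 0 v"

lemma mpos_is_least: "is_least_wrt le {w. sle 0 w \<and> le v w} (mpos v)"
proof -
  obtain m where m: "is_least_wrt le {w. sle 0 w \<and> le v w} m"
    using mixed_lattice unfolding mixed_lattice_vs_def by blast
  then show ?thesis unfolding mpos_def mup_def using the_is_least_wrt[OF le_order m] by simp
qed

lemma mpos_sle0: "sle 0 (mpos v)"
  and le_mpos: "le v (mpos v)"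
  and mpos_least: "sle 0 k \<Longrightarrow> le v k \<Longrightarrow> le (mpos v) k"
  using mpos_is_least unfolding is_least_wrt_def by auto

lemma mup_eq_mpos: "mup le sle x y = x + mpos (y - x)"
proof -
  have "is_least_wrt le {w. sle x w \<and> le y w} (x + mpos (y - x))"
    unfolding is_least_wrt_def
  proof (intro conjI ballI CollectI)
    show "sle x (x + mpos (y - x))"
      by (rule sle_translate[OF mpos_sle0, where c = x]) simp_all
    show "le y (x + mpos (y - x))"
      by (rule le_translate[OF le_mpos, where c = x]) (simp_all add: algebra_simps)
  next
    fix w assume w: "w \<in> {w. sle x w \<and> le y w}"
    have "le y w" using w by simp
    then have "le (y - x) (w - x)" by (rule le_translate[where c = "- x"]) simp_all
    moreover have "sle 0 (w - x)" using w sle_iff_diff[of x w] by simp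
    ultimately have "le (mpos (y - x)) (w - x)" by (intro mpos_least)
    then show "le (x + mpos (y - x)) w" by (rule le_translate[where c = x]) (simp_all add: algebra_simps)
  qed
  then show ?thesis unfolding mup_def by (rule the_is_least_wrt[OF le_order])
qed

lemma mlow_eq_mpos: "mlow le sle x y = x - mpos (x - y)"
proof -
  have "is_greatest_wrt le {w. sle w x \<and> le w y} (x - mpos (x - y))"
    unfolding is_greatest_wrt_def
  proof (intro conjI ballI CollectI)
    show "sle (x - mpos (x - y)) x"
      by (rule sle_translate[OF mpos_sle0, where c = "x - mpos (x - y)"]) simp_all
    show "le (x - mpos (x - y)) y"
      by (rule le_translate[OF le_mpos, where c = "y - mpos (x - y)"]) (simp_all add: algebra_simps)
  next
    fix w assume w: "w \<in> {w. sle w x \<and> le w y}"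
    have "le w y" using w by simp
    then have "le (x - y) (x - w)" by (rule le_translate[where c = "x - y - w"]) simp_all
    moreover have "sle 0 (x - w)" using w sle_iff_diff[of w x] by simp
    ultimately have "le (mpos (x - y)) (x - w)" by (intro mpos_least)
    then show "le w (x - mpos (x - y))"
      by (rule le_translate[where c = "w - mpos (x - y)"]) (simp_all add: algebra_simps)
  qed
  then show ?thesis unfolding mlow_def by (rule the_is_greatest_wrt[OF le_order])
qed

lemma mpos_mono: "le v w \<Longrightarrow> le (mpos v) (mpos w)"
  using mpos_least[OF mpos_sle0] vpo_trans[OF le_order _ le_mpos] by blast

lemma mpos_eq_self: "sle 0 k \<Longrightarrow> mpos k = k"
  using mpos_least[of k k] vpo_refl[OF le_order] vpo_antisym[OF le_order _ le_mpos] by blast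

lemma sle0_diff_mpos: "sle 0 a \<Longrightarrow> sle 0 b \<Longrightarrow> sle 0 (a - mpos (a - b))"
  using quasi_regular unfolding quasi_regular_def mlow_eq_mpos by blast

lemma sle_imp_le:
  assumes "sle x y"
  shows "le x y"
proof -
  have k: "sle 0 (y - x)" using assms sle_iff_diff[of x y] by blast
  \<comment> \<open>quasi-regularity applied to \<open>0 \<curlywedge> (y - x)\<close> forces \<open>mpos (x - y) = 0\<close>\<close>
  have "sle (mpos (x - y)) 0"
    using sle0_diff_mpos[OF vpo_refl[OF sle_order] k] sle_iff_diff[of _ 0] by simp
  then have "mpos (x - y) = 0" using vpo_antisym[OF sle_order _ mpos_sle0] by blast
  then have "le (x - y) 0" using le_mpos[of "x - y"] by simp
  then show ?thesis by (rule le_translate[where c = y]) simp_all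
qed

lemma mpos_le0: "le 0 (mpos v)"
  using sle_imp_le[OF mpos_sle0] .

lemma mpos_diff_le_self: "le 0 z \<Longrightarrow> sle 0 x \<Longrightarrow> le (mpos (x - z)) x"
  using mpos_mono[of "x - z" x] mpos_eq_self[of x] le_translate[of 0 z "x - z"] by simp

lemma mpos_scaleR:
  assumes c: "0 < c"
  shows "mpos (c *\<^sub>R v) = c *\<^sub>R mpos v"
proof (rule vpo_antisym[OF le_order])
  show "le (mpos (c *\<^sub>R v)) (c *\<^sub>R mpos v)"
    using c by (intro mpos_least vpo_scaleR_nonneg[OF sle_order mpos_sle0]
        vpo_scaleR[OF le_order le_mpos]) simp_all
  have "le (inverse c *\<^sub>R (c *\<^sub>R v)) (inverse c *\<^sub>R mpos (c *\<^sub>R v))"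
    using c by (intro vpo_scaleR[OF le_order le_mpos]) simp
  then have "le (mpos v) (inverse c *\<^sub>R mpos (c *\<^sub>R v))"
    using c by (intro mpos_least vpo_scaleR_nonneg[OF sle_order mpos_sle0]) simp_all
  then have "le (c *\<^sub>R mpos v) (c *\<^sub>R (inverse c *\<^sub>R mpos (c *\<^sub>R v)))"
    using c by (intro vpo_scaleR[OF le_order]) simp_all
  then show "le (c *\<^sub>R mpos v) (mpos (c *\<^sub>R v))" using c by simp
qed

end

section \<open>The left disjoint complement\<close>

locale left_disjoint_complement_of = quasi_regular_mixed_lattice +
  fixes A :: "'a set"
  assumes subspace_A: "subspace A"
begin

definition dcone :: "'a set" where
  "dcone = {x. sle 0 x \<and> (\<forall>z\<in>A. le 0 z \<longrightarrow> mpos (x - z) = x)}"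

lemma dcone_eq: "{x. sle 0 x \<and> (\<forall>z\<in>A. le 0 z \<longrightarrow> mlow le sle x z = 0)} = dcone"
proof -
  have "x - mpos (x - z) = 0 \<longleftrightarrow> mpos (x - z) = x" for x z :: 'a by auto
  then show ?thesis unfolding dcone_def mlow_eq_mpos by simp
qed

lemma dcone_sle0: "x \<in> dcone \<Longrightarrow> sle 0 x"
  and dcone_mpos_eq: "x \<in> dcone \<Longrightarrow> z \<in> A \<Longrightarrow> le 0 z \<Longrightarrow> mpos (x - z) = x"
  unfolding dcone_def by simp_all

lemma dcone_hereditary:
  assumes p: "sle 0 p" and pd: "sle p d" and d: "d \<in> dcone"
  shows "p \<in> dcone"
  unfolding dcone_def
proof (intro CollectI conjI ballI impI)
  show "sle 0 p" by fact
  fix z assume z: "z \<in> A" "le 0 z"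
  have "sle 0 (mpos (p - z) + (d - p))"
    using vpo_nonneg_add[OF sle_order mpos_sle0] pd sle_iff_diff[of p d] by blast
  moreover have "le (d - z) (mpos (p - z) + (d - p))"
    by (rule le_translate[OF le_mpos, where c = "d - p"]) (simp_all add: algebra_simps)
  ultimately have "le (mpos (d - z)) (mpos (p - z) + (d - p))" by (intro mpos_least)
  then have "le d (mpos (p - z) + (d - p))" using dcone_mpos_eq[OF d z] by simp
  then have "le p (mpos (p - z))" by (rule le_translate[where c = "p - d"]) (simp_all add: algebra_simps)
  then show "mpos (p - z) = p" using vpo_antisym[OF le_order mpos_diff_le_self[OF z(2) p]] by blast
qed

lemma dcone_sle_mpos:
  assumes a: "a \<in> dcone" and e: "sle 0 e" and z: "z \<in> A" "le 0 z"
  shows "sle a (mpos (a + e - z))"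
proof -
  define q where "q = mpos (a + e - z)"
  have a0: "sle 0 a" using dcone_sle0[OF a] .
  have "le q (a + e)"
    unfolding q_def using mpos_diff_le_self[OF z(2) vpo_nonneg_add[OF sle_order a0 e]] by simp
  then have "le (q - e) a" by (rule le_translate[where c = "- e"]) simp_all
  then have upper: "le (mpos (q - e)) a" by (rule mpos_least[OF a0])
  have "le (a - z) (q - e)"
    unfolding q_def by (rule le_translate[OF le_mpos, where c = "- e"]) (simp_all add: algebra_simps)
  then have "le (mpos (a - z)) (mpos (q - e))" by (rule mpos_mono)
  then have lower: "le a (mpos (q - e))" using dcone_mpos_eq[OF a z] by simp
  \<comment> \<open>quasi-regularity: \<open>q \<curlywedge> e = q - mpos (q - e)\<close> is \<open>\<preceq>\<close>-positive, and \<open>mpos (q - e) = a\<close>\<close>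
  have "sle 0 (q - mpos (q - e))" unfolding q_def using sle0_diff_mpos[OF mpos_sle0 e] .
  then have "sle 0 (q - a)" using vpo_antisym[OF le_order upper lower] by simp
  then show ?thesis using sle_iff_diff[of a q] q_def by simp
qed

lemma dcone_add:
  assumes a: "a \<in> dcone" and b: "b \<in> dcone"
  shows "a + b \<in> dcone"
  unfolding dcone_def
proof (intro CollectI conjI ballI impI)
  show ab0: "sle 0 (a + b)" using vpo_nonneg_add[OF sle_order dcone_sle0[OF a] dcone_sle0[OF b]] .
  fix z assume z: "z \<in> A" "le 0 z"
  define q where "q = mpos (a + b - z)"
  have "sle a q" using dcone_sle_mpos[OF a dcone_sle0[OF b] z] q_def by simp
  then have qa: "sle 0 (q - a)" using sle_iff_diff[of a q] by blast
  have "le (b - z) (q - a)"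
    unfolding q_def by (rule le_translate[OF le_mpos, where c = "- a"]) (simp_all add: algebra_simps)
  then have "le (mpos (b - z)) (q - a)" by (rule mpos_least[OF qa])
  then have "le b (q - a)" using dcone_mpos_eq[OF b z] by simp
  then have "le (a + b) q" by (rule le_translate[where c = a]) (simp_all add: algebra_simps)
  moreover have "le q (a + b)" unfolding q_def using mpos_diff_le_self[OF z(2) ab0] .
  ultimately show "mpos (a + b - z) = a + b" using vpo_antisym[OF le_order] q_def by blast
qed

lemma zero_in_dcone: "0 \<in> dcone"
  unfolding dcone_def
proof (intro CollectI conjI ballI impI)
  show "sle 0 0" using vpo_refl[OF sle_order] .
  fix z assume "z \<in> A" "le 0 z"
  then have "le (0 - z) 0" using vpo_uminus_iff[OF le_order, of z 0] by simp
  then have "le (mpos (0 - z)) 0" using mpos_least[OF vpo_refl[OF sle_order]] by blast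
  then show "mpos (0 - z) = 0" using vpo_antisym[OF le_order _ mpos_le0] by blast
qed

lemma dcone_scaleR:
  assumes a: "a \<in> dcone" and c: "0 \<le> c"
  shows "c *\<^sub>R a \<in> dcone"
proof (cases "c = 0")
  case True
  then show ?thesis using zero_in_dcone by simp
next
  case False
  with c have c: "0 < c" by simp
  show ?thesis unfolding dcone_def
  proof (intro CollectI conjI ballI impI)
    show "sle 0 (c *\<^sub>R a)" using vpo_scaleR_nonneg[OF sle_order dcone_sle0[OF a]] c by simp
    fix z assume z: "z \<in> A" "le 0 z"
    have "inverse c *\<^sub>R z \<in> A" using subspace_scale[OF subspace_A z(1)] .
    moreover have "le 0 (inverse c *\<^sub>R z)" using vpo_scaleR_nonneg[OF le_order z(2)] c by simp
    ultimately have "mpos (a - inverse c *\<^sub>R z) = a" using dcone_mpos_eq[OF a] by blast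
    moreover have "c *\<^sub>R a - z = c *\<^sub>R (a - inverse c *\<^sub>R z)" using c by (simp add: algebra_simps)
    ultimately show "mpos (c *\<^sub>R a - z) = c *\<^sub>R a" using mpos_scaleR[OF c] by simp
  qed
qed

lemma mpos_diff_in_dcone:
  assumes a: "a \<in> dcone" and b: "b \<in> dcone"
  shows "mpos (a - b) \<in> dcone"
proof -
  have "sle 0 (a - mpos (a - b))" using sle0_diff_mpos[OF dcone_sle0[OF a] dcone_sle0[OF b]] .
  then have "sle (mpos (a - b)) a" using sle_iff_diff[of "mpos (a - b)" a] by blast
  then show ?thesis using dcone_hereditary[OF mpos_sle0 _ a] by blast
qed

lemma dcone_Sup:
  assumes S: "S \<noteq> {}" "S \<subseteq> dcone" and t: "is_least_wrt sle {u. \<forall>d\<in>S. sle d u} t"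
  shows "t \<in> dcone"
proof -
  have ub: "sle d t" if "d \<in> S" for d using t that unfolding is_least_wrt_def by blast
  obtain d0 where "d0 \<in> S" using S(1) by blast
  then have t0: "sle 0 t" using vpo_trans[OF sle_order dcone_sle0 ub] S(2) by blast
  show ?thesis unfolding dcone_def
  proof (intro CollectI conjI ballI impI)
    show "sle 0 t" by fact
    fix z assume z: "z \<in> A" "le 0 z"
    have "sle d (mpos (t - z))" if "d \<in> S" for d
    proof -
      have "sle 0 (t - d)" using ub[OF \<open>d \<in> S\<close>] sle_iff_diff[of d t] by blast
      then have "sle d (mpos (d + (t - d) - z))"
        using dcone_sle_mpos[OF _ _ z] \<open>d \<in> S\<close> S(2) by blast
      then show ?thesis by simp
    qed
    then have "sle t (mpos (t - z))" using t unfolding is_least_wrt_def by blast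
    then have "le t (mpos (t - z))" by (rule sle_imp_le)
    then show "mpos (t - z) = t" using vpo_antisym[OF le_order mpos_diff_le_self[OF z(2) t0]] by blast
  qed
qed

lemma mpos_Sup_in_dcone:
  assumes S: "mpos ` S \<subseteq> dcone" and t: "is_least_wrt le {u. \<forall>d\<in>S. le d u} t"
  shows "mpos t \<in> dcone"
  unfolding dcone_def
proof (intro CollectI conjI ballI impI)
  show "sle 0 (mpos t)" by (rule mpos_sle0)
  fix z assume z: "z \<in> A" "le 0 z"
  have "le d (mpos (mpos t - z))" if "d \<in> S" for d
  proof -
    have "le d t" using t that unfolding is_least_wrt_def by blast
    then have "le (mpos d) (mpos t)" by (rule mpos_mono)
    then have "le (mpos d - z) (mpos t - z)" by (rule le_translate[where c = "- z"]) simp_all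
    then have "le (mpos (mpos d - z)) (mpos (mpos t - z))" by (rule mpos_mono)
    then have "le (mpos d) (mpos (mpos t - z))" using dcone_mpos_eq[of "mpos d" z] S that z by auto
    then show ?thesis using vpo_trans[OF le_order le_mpos] by blast
  qed
  then have "le t (mpos (mpos t - z))" using t unfolding is_least_wrt_def by blast
  then have "le (mpos t) (mpos (mpos t - z))" by (rule mpos_least[OF mpos_sle0])
  then show "mpos (mpos t - z) = mpos t"
    using vpo_antisym[OF le_order mpos_diff_le_self[OF z(2) mpos_sle0]] by blast
qed

definition dspan :: "'a set" where
  "dspan = {a - b |a b. a \<in> dcone \<and> b \<in> dcone}"

lemma dspanI: "a \<in> dcone \<Longrightarrow> b \<in> dcone \<Longrightarrow> a - b \<in> dspan"
  unfolding dspan_def by blast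

lemma dspanE:
  assumes "x \<in> dspan"
  obtains a b where "a \<in> dcone" "b \<in> dcone" "x = a - b"
  using assms unfolding dspan_def by blast

lemma dcone_subset_dspan: "dcone \<subseteq> dspan"
proof
  fix d assume "d \<in> dcone"
  from dspanI[OF this zero_in_dcone] show "d \<in> dspan" by simp
qed

lemma subspace_dspan: "subspace dspan"
  unfolding subspace_def
proof (intro conjI ballI allI)
  show "0 \<in> dspan" using dcone_subset_dspan zero_in_dcone by blast
next
  fix x y assume "x \<in> dspan" "y \<in> dspan"
  then obtain a b c d where abcd: "a \<in> dcone" "b \<in> dcone" "c \<in> dcone" "d \<in> dcone"
    and "x = a - b" "y = c - d" by (elim dspanE)
  then have "x + y = (a + c) - (b + d)" by (simp add: algebra_simps)
  moreover have "(a + c) - (b + d) \<in> dspan" using abcd by (intro dspanI dcone_add)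
  ultimately show "x + y \<in> dspan" by simp
next
  fix c :: real and x assume "x \<in> dspan"
  then obtain a b where ab: "a \<in> dcone" "b \<in> dcone" and x: "x = a - b" by (elim dspanE)
  show "c *\<^sub>R x \<in> dspan"
  proof (cases "0 \<le> c")
    case True
    have "c *\<^sub>R a - c *\<^sub>R b \<in> dspan" using ab True by (intro dspanI dcone_scaleR)
    then show ?thesis unfolding x by (simp add: scaleR_diff_right)
  next
    case False
    then have "(- c) *\<^sub>R b - (- c) *\<^sub>R a \<in> dspan" using ab by (intro dspanI dcone_scaleR) simp_all
    then show ?thesis unfolding x by (simp add: algebra_simps)
  qed
qed

lemmas dspan_add = subspace_add[OF subspace_dspan]
  and dspan_diff = subspace_diff[OF subspace_dspan]
  and dspan_uminus = subspace_neg[OF subspace_dspan]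

lemma mpos_in_dcone: "x \<in> dspan \<Longrightarrow> mpos x \<in> dcone"
  by (elim dspanE) (simp add: mpos_diff_in_dcone)

lemma dspan_sle0_imp_dcone:
  assumes "x \<in> dspan" "sle 0 x"
  shows "x \<in> dcone"
proof -
  obtain a b where ab: "a \<in> dcone" "b \<in> dcone" "x = a - b" using assms(1) by (elim dspanE)
  have "sle x a" using sle_iff_diff[of "a - b" a] dcone_sle0[OF ab(2)] ab(3) by simp
  then show ?thesis using dcone_hereditary[OF assms(2) _ ab(1)] by blast
qed

lemma mixed_lattice_subspace_dspan: "mixed_lattice_subspace le sle dspan"
  unfolding mixed_lattice_subspace_def mlow_eq_mpos mup_eq_mpos
proof (intro conjI ballI subspace_dspan)
  fix x y assume x: "x \<in> dspan" and y: "y \<in> dspan"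
  have "mpos (x - y) \<in> dspan" "mpos (y - x) \<in> dspan"
    using dspan_diff[OF x y] dspan_diff[OF y x] mpos_in_dcone dcone_subset_dspan by blast+
  then show "x - mpos (x - y) \<in> dspan" "x + mpos (y - x) \<in> dspan"
    using dspan_diff[OF x] dspan_add[OF x] by blast+
qed

lemma order_convex_dspan: "order_convex sle dspan"
  unfolding order_convex_def
proof (intro allI impI; elim conjE)
  fix x y w assume "x \<in> dspan" "y \<in> dspan" "sle x w" "sle w y"
  obtain a b where ab: "a \<in> dcone" "b \<in> dcone" "x = a - b" using \<open>x \<in> dspan\<close> by (elim dspanE)
  obtain c d where cd: "c \<in> dcone" "d \<in> dcone" "y = c - d" using \<open>y \<in> dspan\<close> by (elim dspanE)
  have wx: "sle 0 (w - x)" using \<open>sle x w\<close> sle_iff_diff[of x w] by blast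
  have "sle 0 (y - w)" using \<open>sle w y\<close> sle_iff_diff[of w y] by blast
  then have "sle 0 ((y - w) + d + a)"
    using vpo_nonneg_add[OF sle_order] dcone_sle0[OF cd(2)] dcone_sle0[OF ab(1)] by blast
  moreover have "(y - w) + d + a = (c + b) - (w - x)" using ab(3) cd(3) by (simp add: algebra_simps)
  ultimately have "sle (w - x) (c + b)" using sle_iff_diff[of "w - x" "c + b"] by simp
  then have "w - x \<in> dcone" using dcone_hereditary[OF wx _ dcone_add[OF cd(1) ab(2)]] by blast
  from dspanI[OF dcone_add[OF ab(1) this] ab(2)] show "w \<in> dspan" using ab(3) by simp
qed

lemma specific_ideal_dspan: "specific_ideal le sle dspan"
  unfolding specific_ideal_def using mixed_lattice_subspace_dspan order_convex_dspan by blast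

lemma left_disjoint_complement_eq_dspan: "left_disjoint_complement le sle A = dspan"
  unfolding left_disjoint_complement_def dcone_eq
proof (rule antisym)
  show "\<Inter>{I. specific_ideal le sle I \<and> dcone \<subseteq> I} \<subseteq> dspan"
    using specific_ideal_dspan dcone_subset_dspan by (intro Inter_lower) blast
  show "dspan \<subseteq> \<Inter>{I. specific_ideal le sle I \<and> dcone \<subseteq> I}"
  proof (intro subsetI InterI)
    fix x I assume "x \<in> dspan" and I: "I \<in> {I. specific_ideal le sle I \<and> dcone \<subseteq> I}"
    from \<open>x \<in> dspan\<close> obtain a b where "a \<in> dcone" "b \<in> dcone" "x = a - b" by (elim dspanE)
    with I have "a \<in> I" "b \<in> I" "x = a - b" by auto
    moreover have "subspace I" using I unfolding specific_ideal_def mixed_lattice_subspace_def by blast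
    ultimately show "x \<in> I" using subspace_diff by blast
  qed
qed

lemma regular_dspan: "regular_subspace sle dspan"
  unfolding regular_subspace_def
proof (rule antisym)
  show "dspan \<subseteq> {x - y |x y. x \<in> dspan \<and> sle 0 x \<and> y \<in> dspan \<and> sle 0 y}"
  proof
    fix x assume "x \<in> dspan"
    then obtain a b where "a \<in> dcone" "b \<in> dcone" "x = a - b" by (elim dspanE)
    then show "x \<in> {x - y |x y. x \<in> dspan \<and> sle 0 x \<and> y \<in> dspan \<and> sle 0 y}"
      using dcone_subset_dspan dcone_sle0 by blast
  qed
  show "{x - y |x y. x \<in> dspan \<and> sle 0 x \<and> y \<in> dspan \<and> sle 0 y} \<subseteq> dspan"
    using dspan_diff by blast
qed

lemma dspan_sle_Sup_closed:
  assumes C: "C \<noteq> {}" "C \<subseteq> dspan" "\<forall>a\<in>C. \<forall>b\<in>C. \<exists>c\<in>C. sle a c \<and> sle b c"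
    and s: "is_least_wrt sle {u. \<forall>c\<in>C. sle c u} s"
  shows "s \<in> dspan"
proof -
  obtain c0 where c0: "c0 \<in> C" using C(1) by blast
  let ?S = "(\<lambda>c. c - c0) ` {c \<in> C. sle c0 c}"
  have "c0 - c0 \<in> ?S" using c0 vpo_refl[OF sle_order, of c0] by blast
  then have "?S \<noteq> {}" by blast
  moreover have "?S \<subseteq> dcone"
  proof
    fix d assume "d \<in> ?S"
    then obtain c where "c \<in> C" "sle c0 c" "d = c - c0" by blast
    moreover have "c - c0 \<in> dspan" using C(2) \<open>c \<in> C\<close> c0 by (intro dspan_diff) auto
    ultimately show "d \<in> dcone" using dspan_sle0_imp_dcone sle_iff_diff[of c0 c] by blast
  qed
  ultimately have "s - c0 \<in> dcone"
    by (rule dcone_Sup[OF _ _ is_least_wrt_translate[OF sle_order C(3) c0 s]])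
  then have "c0 + (s - c0) \<in> dspan"
    using C(2) c0 dcone_subset_dspan by (intro dspan_add) auto
  then show ?thesis by simp
qed

lemma dspan_le_Sup_closed:
  assumes convex: "order_convex le dspan"
    and C: "C \<noteq> {}" "C \<subseteq> dspan" "\<forall>a\<in>C. \<forall>b\<in>C. \<exists>c\<in>C. le a c \<and> le b c"
    and s: "is_least_wrt le {u. \<forall>c\<in>C. le c u} s"
  shows "s \<in> dspan"
proof -
  obtain c0 where c0: "c0 \<in> C" using C(1) by blast
  let ?S = "(\<lambda>c. c - c0) ` {c \<in> C. le c0 c}"
  have t: "is_least_wrt le {u. \<forall>d\<in>?S. le d u} (s - c0)"
    using is_least_wrt_translate[OF le_order C(3) c0 s] .
  have "mpos ` ?S \<subseteq> dcone"
  proof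
    fix p assume "p \<in> mpos ` ?S"
    then obtain c where "c \<in> C" "p = mpos (c - c0)" by blast
    moreover have "c - c0 \<in> dspan" using C(2) \<open>c \<in> C\<close> c0 by (intro dspan_diff) auto
    ultimately show "p \<in> dcone" using mpos_in_dcone by blast
  qed
  then have "mpos (s - c0) \<in> dcone" by (rule mpos_Sup_in_dcone[OF _ t])
  then have upper: "mpos (s - c0) \<in> dspan" using dcone_subset_dspan by blast
  have "c0 - c0 \<in> ?S" using c0 vpo_refl[OF le_order] by blast
  then have "le (c0 - c0) (s - c0)" using t unfolding is_least_wrt_def by blast
  then have lower: "le 0 (s - c0)" by simp
  have "0 \<in> dspan" using zero_in_dcone dcone_subset_dspan by blast
  with upper lower have "s - c0 \<in> dspan"
    using convex le_mpos[of "s - c0"] unfolding order_convex_def by blast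
  then have "c0 + (s - c0) \<in> dspan"
    using C(2) c0 by (intro dspan_add) auto
  then show ?thesis by simp
qed

lemma specific_band_dspan: "specific_band le sle dspan"
  unfolding specific_band_def
  using specific_ideal_dspan order_closed_if_Sup_closed[OF sle_order dspan_uminus dspan_sle_Sup_closed]
  by (rule conjI)

lemma band_dspan_if_ideal:
  assumes ideal: "ideal_ml le sle dspan"
  shows "band le sle dspan"
proof -
  have "order_convex le dspan" using ideal unfolding ideal_ml_def by (rule conjunct2)
  from order_closed_if_Sup_closed[OF le_order dspan_uminus dspan_le_Sup_closed[OF this]]
  have "order_closed le dspan" .
  with ideal show ?thesis unfolding band_def by (rule conjI)
qed

end

theorem theorem5p5:
  fixes le sle :: "'a::real_vector \<Rightarrow> 'a \<Rightarrow> bool" and A :: "'a set"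
  assumes "mixed_lattice_vs le sle"
    and "quasi_regular le sle"
    and "mixed_lattice_subspace le sle A"
  shows "specific_band le sle (left_disjoint_complement le sle A)
         \<and> regular_subspace sle (left_disjoint_complement le sle A)
         \<and> (ideal_ml le sle (left_disjoint_complement le sle A) \<longrightarrow>
              band le sle (left_disjoint_complement le sle A)
              \<and> regular_subspace sle (left_disjoint_complement le sle A))"
proof -
  interpret left_disjoint_complement_of le sle A
    using assms by unfold_locales (simp_all add: mixed_lattice_subspace_def)
  show ?thesis
    unfolding left_disjoint_complement_eq_dspan
    using specific_band_dspan regular_dspan band_dspan_if_ideal by simp
qed

end
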